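(* Let $G$ be a finite abelian group, $T \subsetneq G$ a non-empty subset, and fix $x \in G$ with $T + x \ne T$. Put $T^{\uparrow} = T + x$, $C^{\uparrow} = T^{\uparrow}\setminus T$, $C^{\downarrow} = T \setminus T^{\uparrow}$ and $A = T \cup T^{\uparrow}$. For integers $1 \le i \le d$ let $C_{i,d} = C^{\downarrow}\times\dots\times C^{\downarrow}\times C^{\uparrow}\times C^{\downarrow}\times\dots\times C^{\downarrow} \subset A^d$ (with $d$ factors, $C^{\uparrow}$ in the $i$-th factor), and let $C_{0,d} = (C^{\downarrow})^d$. Then for any integers $d \ge 1$ and $0 \le i \le d$, the set $A^d \setminus C_{i,d} \subset G^d$ is $T$-tilable.
   Context: A copy of $T$ in $G^d$ is a translate $\mathsf{T}_j + y$ ($y\in G^d$, $1\le j\le d$), where $\mathsf{T}_j\subset G^d$ is the set of points with $j$-th coordinate in $T$ and all other coordinates $0$. A subset of $G^d$ is $T$-tilable if it is a disjoint union of copies of $T$. *)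

theory Defs
  imports Main "HOL-Library.Disjoint_Sets"
begin

text \<open>Points of G^d are modelled as functions nat => G that vanish from index d on;
coordinates are indexed 0,...,d-1 (coordinate j here is coordinate j+1 of the paper).\<close>

definition Gpow :: "nat \<Rightarrow> (nat \<Rightarrow> 'a::zero) set" where
  "Gpow d = {p. \<forall>k\<ge>d. p k = 0}"

definition box :: "nat \<Rightarrow> (nat \<Rightarrow> 'a::zero set) \<Rightarrow> (nat \<Rightarrow> 'a) set" where
  "box d S = {p \<in> Gpow d. \<forall>k<d. p k \<in> S k}"

definition axis_set :: "nat \<Rightarrow> 'a::zero set \<Rightarrow> (nat \<Rightarrow> 'a) set" where
  "axis_set j T = {(\<lambda>k. if k = j then t else 0) | t. t \<in> T}"

definition is_copy :: "nat \<Rightarrow> 'a::ab_group_add set \<Rightarrow> (nat \<Rightarrow> 'a) set \<Rightarrow> bool" where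
  "is_copy d T C \<longleftrightarrow> (\<exists>y\<in>Gpow d. \<exists>j<d. C = (\<lambda>p k. p k + y k) ` axis_set j T)"

definition tilable :: "nat \<Rightarrow> 'a::ab_group_add set \<Rightarrow> (nat \<Rightarrow> 'a) set \<Rightarrow> bool" where
  "tilable d T S \<longleftrightarrow> (\<exists>\<C>. (\<forall>C\<in>\<C>. is_copy d T C) \<and> disjoint \<C> \<and> \<Union>\<C> = S)"

end

theory Submission
  imports Defs
begin

text \<open>Suppose every factor \<open>S k\<close> of a box sits in \<open>A\<close> with complement \<open>A - S k\<close> a translate
  \<open>T + c k\<close>. For a point \<open>q \<in> A\<^sup>d\<close> outside the box, let \<open>k\<close> be the last coordinate with
  \<open>q k \<notin> S k\<close>; then \<open>q\<close> lies in the copy of \<open>T\<close> along axis \<open>k\<close> based at \<open>q\<close> with its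
  \<open>k\<close>-th coordinate replaced by \<open>c k\<close>. These copies, for all bases \<open>y\<close> with \<open>y k = c k\<close>,
  \<open>y j \<in> A\<close> below \<open>k\<close> and \<open>y j \<in> S j\<close> above \<open>k\<close>, tile \<open>A\<^sup>d\<close> minus the box. In the theorem
  \<open>A = T \<union> (T + x)\<close>, and the complements of \<open>C\<^sup>\<up>\<close> and \<open>C\<^sup>\<down>\<close> in \<open>A\<close> are \<open>T\<close> and \<open>T + x\<close>.\<close>

definition tile :: "nat \<Rightarrow> 'a::ab_group_add set \<Rightarrow> (nat \<Rightarrow> 'a) \<Rightarrow> (nat \<Rightarrow> 'a) set" where
  "tile k T y = (\<lambda>p l. p l + y l) ` axis_set k T"

lemma mem_tile: "q \<in> tile k T y \<longleftrightarrow> q k - y k \<in> T \<and> (\<forall>l. l \<noteq> k \<longrightarrow> q l = y l)"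
proof
  assume "q \<in> tile k T y"
  then obtain t where "t \<in> T" "q = (\<lambda>l. (if l = k then t else 0) + y l)"
    unfolding tile_def axis_set_def by auto
  then show "q k - y k \<in> T \<and> (\<forall>l. l \<noteq> k \<longrightarrow> q l = y l)" by auto
next
  assume h: "q k - y k \<in> T \<and> (\<forall>l. l \<noteq> k \<longrightarrow> q l = y l)"
  then have "q = (\<lambda>l. (if l = k then q k - y k else 0) + y l)"
    by (auto simp: fun_eq_iff)
  with h show "q \<in> tile k T y"
    unfolding tile_def axis_set_def
    by (intro image_eqI[where x="\<lambda>l. if l = k then q k - y k else 0"]) auto
qed

lemma is_copy_tile: "k < d \<Longrightarrow> y \<in> Gpow d \<Longrightarrow> is_copy d T (tile k T y)"
  unfolding is_copy_def tile_def by blast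

lemma mem_translate_iff: "z \<in> (\<lambda>t. t + c) ` T \<longleftrightarrow> z - c \<in> T"
  for c :: "'a::ab_group_add"
  by (auto intro: image_eqI[where x="z - c"])

definition staircase_base ::
    "nat \<Rightarrow> 'a set \<Rightarrow> (nat \<Rightarrow> 'a set) \<Rightarrow> (nat \<Rightarrow> 'a::zero) \<Rightarrow> nat \<Rightarrow> (nat \<Rightarrow> 'a) \<Rightarrow> bool" where
  "staircase_base d A S c k y \<longleftrightarrow> k < d \<and> y \<in> Gpow d \<and> y k = c k \<and> (\<forall>j<k. y j \<in> A)
     \<and> (\<forall>j. k < j \<and> j < d \<longrightarrow> y j \<in> S j)"

locale box_complement =
  fixes A :: "'a::ab_group_add set" and S :: "nat \<Rightarrow> 'a set" and T :: "'a set" and c :: "nat \<Rightarrow> 'a"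
  assumes factor_subset: "\<And>k. S k \<subseteq> A"
    and complement_translate: "\<And>k. A - S k = (\<lambda>t. t + c k) ` T"
begin

lemma mem_complement_iff: "z \<in> A - S k \<longleftrightarrow> z - c k \<in> T"
  using complement_translate[of k] by (simp add: mem_translate_iff)

lemma staircase_tiles_meet_eq:
  assumes y: "staircase_base d A S c k y" and y': "staircase_base d A S c k' y'"
    and q: "q \<in> tile k T y" "q \<in> tile k' T y'"
  shows "k = k' \<and> y = y'"
proof -
  have not_less: False if "staircase_base d A S c l z" "staircase_base d A S c l' z'"
      "q \<in> tile l T z" "q \<in> tile l' T z'" "l < l'" for l l' z z'
  proof -
    have "q l' \<in> S l'"
      using that by (simp add: staircase_base_def mem_tile)
    moreover have "q l' - c l' \<in> T"
      using that by (simp add: staircase_base_def mem_tile)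
    ultimately show False
      using mem_complement_iff by blast
  qed
  have "k = k'"
    using not_less[OF y y' q] not_less[OF y' y q(2,1)] by (cases k k' rule: linorder_cases) auto
  moreover have "y l = y' l" for l
    using q y y' \<open>k = k'\<close> by (cases "l = k") (auto simp: mem_tile staircase_base_def)
  ultimately show ?thesis by auto
qed

lemma staircase_tile_subset:
  assumes y: "staircase_base d A S c k y"
  shows "tile k T y \<subseteq> box d (\<lambda>_. A) - box d S"
proof
  fix q assume q: "q \<in> tile k T y"
  have "q k - c k \<in> T"
    using q y by (simp add: mem_tile staircase_base_def)
  then have qk: "q k \<in> A - S k"
    using mem_complement_iff by blast
  have "q l \<in> A" if "l < d" for l
    using q y qk factor_subset that
    by (cases l k rule: linorder_cases) (auto simp: mem_tile staircase_base_def intro: subsetD[OF factor_subset])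
  moreover have "q \<in> Gpow d"
    using q y unfolding Gpow_def staircase_base_def by (auto simp: mem_tile)
  moreover have "k < d"
    using y by (simp add: staircase_base_def)
  ultimately show "q \<in> box d (\<lambda>_. A) - box d S"
    using qk unfolding box_def by auto
qed

lemma staircase_tile_cover:
  assumes "q \<in> box d (\<lambda>_. A) - box d S"
  obtains k y where "staircase_base d A S c k y" "q \<in> tile k T y"
proof -
  have G: "q \<in> Gpow d" and QA: "\<And>l. l < d \<Longrightarrow> q l \<in> A" and ex: "\<exists>l<d. q l \<notin> S l"
    using assms unfolding box_def by auto
  define k where "k = Max {l. l < d \<and> q l \<notin> S l}"
  have kd: "k < d" and qk: "q k \<notin> S k"
    using Max_in[of "{l. l < d \<and> q l \<notin> S l}"] ex unfolding k_def by auto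
  have above: "q j \<in> S j" if "k < j" "j < d" for j
    using Max_ge[of "{l. l < d \<and> q l \<notin> S l}" j] that unfolding k_def by fastforce
  define y where "y = q(k := c k)"
  have "staircase_base d A S c k y"
    using G kd QA above unfolding staircase_base_def y_def Gpow_def by auto
  moreover have "q \<in> tile k T y"
    using qk QA[OF kd] mem_complement_iff[of "q k" k] by (simp add: mem_tile y_def)
  ultimately show thesis by (rule that)
qed

theorem tilable_box_complement: "tilable d T (box d (\<lambda>_. A) - box d S)"
proof -
  define F where "F = {tile k T y | k y. staircase_base d A S c k y}"
  have "\<forall>C\<in>F. is_copy d T C"
    unfolding F_def staircase_base_def by (auto intro: is_copy_tile)
  moreover have "disjoint F"
  proof (rule disjointI)
    fix a b assume "a \<in> F" "b \<in> F" "a \<noteq> b"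
    then obtain k y k' y' where "staircase_base d A S c k y" "staircase_base d A S c k' y'"
      and ab: "a = tile k T y" "b = tile k' T y'"
      unfolding F_def by blast
    with \<open>a \<noteq> b\<close> show "a \<inter> b = {}"
      using staircase_tiles_meet_eq by blast
  qed
  moreover have "\<Union>F \<subseteq> box d (\<lambda>_. A) - box d S"
    using staircase_tile_subset unfolding F_def by blast
  moreover have "box d (\<lambda>_. A) - box d S \<subseteq> \<Union>F"
  proof
    fix q assume "q \<in> box d (\<lambda>_. A) - box d S"
    then obtain k y where "staircase_base d A S c k y" "q \<in> tile k T y"
      by (rule staircase_tile_cover)
    then show "q \<in> \<Union>F"
      unfolding F_def by blast
  qed
  ultimately show ?thesis
    unfolding tilable_def by (intro exI[of _ F]) auto
qed

end

theorem proposition10: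
  fixes T :: "'a::{ab_group_add, finite} set" and x :: 'a and d i :: nat
  assumes "T \<noteq> {}" and "T \<noteq> UNIV"
    and "(\<lambda>t. t + x) ` T \<noteq> T"
    and "1 \<le> d" and "i \<le> d"
  shows "let Tup = (\<lambda>t. t + x) ` T; Cup = Tup - T; Cdown = T - Tup; A = T \<union> Tup
         in tilable d T (box d (\<lambda>_. A) - box d (\<lambda>k. if k + 1 = i then Cup else Cdown))"
proof -
  define Tup where "Tup = (\<lambda>t. t + x) ` T"
  interpret box_complement "T \<union> Tup" "\<lambda>k. if k + 1 = i then Tup - T else T - Tup" T
      "\<lambda>k. if k + 1 = i then 0 else x"
    by unfold_locales (auto simp: Tup_def)
  show ?thesis
    using tilable_box_complement unfolding Let_def Tup_def .
qed

end
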